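(* Let $\mathbf{A}\in\mathbb{R}^{m\times n}$ have rank $\rho$ with thin SVD $\mathbf{A}=\mathbf{U}_k\mathbf{\Sigma}_k\mathbf{V}_k^{T}+\mathbf{U}_{\rho-k}\mathbf{\Sigma}_{\rho-k}\mathbf{V}_{\rho-k}^{T}$, where $1\le k<\rho$, $\mathbf{U}_k\in\mathbb{R}^{m\times k}$, $\mathbf{V}_k\in\mathbb{R}^{n\times k}$ hold the top $k$ left/right singular vectors, $\mathbf{U}_{\rho-k},\mathbf{V}_{\rho-k}$ hold the remaining $\rho-k$ ones, and the singular values are $\sigma_1\ge\dots\ge\sigma_\rho>0$; let $\gamma_k=\sigma_{k+1}/\sigma_k$. Let $p\ge0$ be an integer and $\mathbf{S}\in\mathbb{R}^{n\times k}$ any matrix. Let $(\mathbf{A}\mathbf{A}^{T})^p\mathbf{A}\mathbf{S}=\mathbf{Q}\mathbf{R}$ be a QR factorization with $\mathbf{Q}\in\mathbb{R}^{m\times k}$ having orthonormal columns and $\mathbf{R}\in\mathbb{R}^{k\times k}$, let $\mathbf{Q}^{T}\mathbf{A}=\mathbf{U}_{\mathbf{Q}^{T}\mathbf{A}}\mathbf{\Sigma}_{\mathbf{Q}^{T}\mathbf{A}}\mathbf{V}_{\mathbf{Q}^{T}\mathbf{A}}^{T}$ be an SVD with $\mathbf{U}_{\mathbf{Q}^{T}\mathbf{A}}\in\mathbb{R}^{k\times k}$ orthogonal, and set $\tilde{\mathbf{U}}_k=\mathbf{Q}\mathbf{U}_{\mathbf{Q}^{T}\mathbf{A}}$. Then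 $$\sigma_k(\mathbf{V}_k^{T}\mathbf{S})\,\|\mathbf{U}_k\mathbf{U}_k^{T}-\tilde{\mathbf{U}}_k\tilde{\mathbf{U}}_k^{T}\|_2\le\gamma_k^{2p+1}\,\sigma_1(\mathbf{V}_{\rho-k}^{T}\mathbf{S}).$$
   Context: $\sigma_i(\mathbf{M})$ denotes the $i$-th largest singular value of a matrix $\mathbf{M}$, and $\|\cdot\|_2$ is the spectral norm. *)

theory Defs
  imports "HOL-Analysis.Analysis"
begin

text \<open>i-th largest singular value (1-indexed) of a real matrix, via the
  Courant--Fischer max-min formula over i-dimensional subspaces of the domain.\<close>
definition sing_val :: "real^'n^'m \<Rightarrow> nat \<Rightarrow> real" where
  "sing_val M i =
     (SUP W \<in> {W :: (real^'n) set. subspace W \<and> dim W = i}.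
        INF x \<in> {x \<in> W. norm x = 1}. norm (M *v x))"

definition spec_norm :: "real^'n^'m \<Rightarrow> real" where
  "spec_norm M = onorm (\<lambda>x. M *v x)"

definition mat_pow :: "real^'n^'n \<Rightarrow> nat \<Rightarrow> real^'n^'n" where
  "mat_pow B p = (((**) B) ^^ p) (mat 1)"

end

theory Submission imports Defs begin

text \<open>With \<open>q = 2p + 1\<close>, the SVD gives \<open>(A A\<^sup>T)\<^sup>p A S = U\<^sub>k G + E\<close> where \<open>G = \<Sigma>\<^sub>k\<^sup>q V\<^sub>k\<^sup>T S\<close>
  and \<open>E = U\<^sub>\<rho>\<^sub>-\<^sub>k \<Sigma>\<^sub>\<rho>\<^sub>-\<^sub>k\<^sup>q V\<^sub>\<rho>\<^sub>-\<^sub>k\<^sup>T S\<close> has columns orthogonal to those of \<open>U\<^sub>k\<close>; moreover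
  \<open>\<parallel>G w\<parallel> \<ge> c \<parallel>w\<parallel>\<close> with \<open>c = \<sigma>\<^sub>k\<^sup>q \<sigma>\<^sub>k(V\<^sub>k\<^sup>T S)\<close> and \<open>\<parallel>E w\<parallel> \<le> t \<parallel>w\<parallel>\<close> with
  \<open>t = \<sigma>\<^sub>k\<^sub>+\<^sub>1\<^sup>q \<sigma>\<^sub>1(V\<^sub>\<rho>\<^sub>-\<^sub>k\<^sup>T S)\<close>. So every vector \<open>x\<close> in the range of \<open>Q\<close> satisfies
  \<open>c \<parallel>x - P x\<parallel> \<le> t \<parallel>P x\<parallel>\<close> for the projection \<open>P = U\<^sub>k U\<^sub>k\<^sup>T\<close>, and \<open>P\<close> maps the range of \<open>Q\<close>
  onto that of \<open>U\<^sub>k\<close>. Splitting an arbitrary vector into its components in the range of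
  \<open>Q\<close> and in its orthogonal complement, these two facts bound \<open>c \<parallel>P - Q Q\<^sup>T\<parallel>\<^sub>2\<close> by \<open>t\<close>.\<close>

declare transpose_matrix_vector [simp del]

lemma inner_matrix_vector_mult_transpose:
  "(M *v u) \<bullet> y = u \<bullet> (transpose M *v y)" for M :: "real^'a::finite^'b::finite"
  by (metis dot_lmul_matrix inner_commute transpose_matrix_vector)

lemma transpose_add: "transpose (A + B) = transpose A + transpose (B::real^'a::finite^'b::finite)"
  by (simp add: transpose_def vec_eq_iff)

lemma transpose_zero: "transpose (0::real^'a::finite^'b::finite) = 0"
  by (simp add: transpose_def vec_eq_iff)

lemma matrix_add_rdistrib: "(A + B) ** C = A ** C + B ** (C::real^'a::finite^'b::finite)"
  by (simp add: matrix_matrix_mult_def vec_eq_iff sum.distrib algebra_simps)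

lemma matrix_vector_mult_surj_if_inj:
  fixes M :: "real^'a::finite^'a"
  assumes "\<And>x. M *v x = 0 \<Longrightarrow> x = 0"
  shows "\<exists>x. M *v x = b"
proof -
  have "inj ((*v) M)"
    by (metis assms matrix_vector_mult_diff_distrib eq_iff_diff_eq_0 injI)
  then have "surj ((*v) M)"
    by (intro eucl.linear_injective_imp_surjective) auto
  then show ?thesis by (metis surjD)
qed

lemma spec_norm_scaled_le:
  assumes "0 \<le> c" and "\<And>y. c * norm (M *v y) \<le> t * norm y"
  shows "c * spec_norm M \<le> t"
proof -
  have "c * spec_norm M = onorm (\<lambda>y. c *\<^sub>R (M *v y))"
    using assms(1) by (simp add: spec_norm_def onorm_scaleR)
  also have "\<dots> \<le> t"
    by (rule onorm_le) (simp add: assms)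
  finally show ?thesis .
qed

definition proj_cols :: "real^'k::finite^'m::finite \<Rightarrow> real^'m \<Rightarrow> real^'m" where
  "proj_cols M y = M *v (transpose M *v y)"

lemma proj_cols_eq: "proj_cols M y = (M ** transpose M) *v y"
  by (simp add: proj_cols_def matrix_vector_mul_assoc)

context
  fixes M :: "real^'k::finite^'m::finite"
  assumes orthonormal: "transpose M ** M = mat 1"
begin

lemma orthonormal_cols_cancel: "transpose M *v (M *v u) = u"
  using orthonormal by (simp add: matrix_vector_mul_assoc)

lemma orthonormal_cols_norm: "norm (M *v u) = norm u"
proof -
  have "(M *v u) \<bullet> (M *v u) = u \<bullet> u"
    by (simp add: inner_matrix_vector_mult_transpose orthonormal_cols_cancel)
  then show ?thesis by (simp add: norm_eq_sqrt_inner)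
qed

lemma proj_cols_residual_orthogonal: "(M *v u) \<bullet> (y - proj_cols M y) = 0"
  by (simp add: proj_cols_def inner_matrix_vector_mult_transpose inner_diff_right
      orthonormal_cols_cancel)

lemma proj_cols_pythagoras: "norm y ^ 2 = norm (proj_cols M y) ^ 2 + norm (y - proj_cols M y) ^ 2"
proof -
  have "norm (proj_cols M y + (y - proj_cols M y)) ^ 2
      = norm (proj_cols M y) ^ 2 + norm (y - proj_cols M y) ^ 2"
    using proj_cols_residual_orthogonal[of "transpose M *v y" y]
    by (intro norm_add_Pythagorean) (simp add: orthogonal_def proj_cols_def)
  then show ?thesis by simp
qed

lemma proj_cols_norm_le: "norm (proj_cols M y) \<le> norm y"
  using proj_cols_pythagoras[of y]
  by (metis abs_norm_cancel le_add_same_cancel1 power2_le_iff_abs_le zero_le_power2 norm_ge_zero)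

end

definition diag_mat :: "('a::finite \<Rightarrow> real) \<Rightarrow> real^'a^'a" where
  "diag_mat a = (\<chi> i j. if i = j then a i else 0)"

lemma diag_mat_mult_vector: "diag_mat a *v v = (\<chi> i. a i * v$i)"
  by (simp add: diag_mat_def matrix_vector_mult_def vec_eq_iff if_distrib[of "\<lambda>x. x * _"]
      cong: if_cong)

lemma diag_mat_mult: "diag_mat a ** diag_mat b = diag_mat (\<lambda>i. a i * b i)"
  by (simp add: diag_mat_def matrix_matrix_mult_def vec_eq_iff if_distrib[of "\<lambda>x. x * _"]
      cong: if_cong)

lemma transpose_diag_mat: "transpose (diag_mat a) = diag_mat a"
  by (simp add: diag_mat_def transpose_def vec_eq_iff)

lemma norm_vec_power2: "norm (v::real^'a::finite) ^ 2 = (\<Sum>i\<in>UNIV. (v$i)^2)"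
  unfolding power2_norm_eq_inner by (simp add: inner_vec_def power2_eq_square)

lemma norm_diag_mat_mult_power2: "norm (diag_mat a *v v) ^ 2 = (\<Sum>i\<in>UNIV. (a i)^2 * (v$i)^2)"
  by (simp add: norm_vec_power2 diag_mat_mult_vector power_mult_distrib)

lemma norm_diag_mat_mult_le:
  assumes "\<And>i. \<bar>a i\<bar> \<le> c"
  shows "norm (diag_mat a *v v) \<le> c * norm v"
proof -
  have c: "c \<ge> 0" using assms[of undefined] by simp
  have "norm (diag_mat a *v v) ^ 2 \<le> (\<Sum>i\<in>UNIV. c^2 * (v$i)^2)"
    unfolding norm_diag_mat_mult_power2
    by (intro sum_mono mult_right_mono) (auto intro: power_mono[of "\<bar>a _\<bar>" c 2, simplified] assms)
  also have "\<dots> = (c * norm v)^2"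
    by (simp add: power_mult_distrib norm_vec_power2 sum_distrib_left)
  finally show ?thesis using c by (simp add: power2_le_iff_abs_le)
qed

lemma norm_diag_mat_mult_ge:
  assumes "\<And>i. c \<le> \<bar>a i\<bar>" and "c \<ge> 0"
  shows "c * norm v \<le> norm (diag_mat a *v v)"
proof -
  have "(c * norm v)^2 = (\<Sum>i\<in>UNIV. c^2 * (v$i)^2)"
    by (simp add: power_mult_distrib norm_vec_power2 sum_distrib_left)
  also have "\<dots> \<le> norm (diag_mat a *v v) ^ 2"
    unfolding norm_diag_mat_mult_power2
    by (intro sum_mono mult_right_mono) (auto intro: power_mono[of c "\<bar>a _\<bar>" 2, simplified] assms)
  finally show ?thesis using assms by (simp add: power2_le_iff_abs_le)
qed

lemma svd_block_mult:
  fixes X1 :: "real^'k::finite^'m::finite" and X2 :: "real^'r::finite^'m"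
    and Y1 :: "real^'k^'n::finite" and Y2 :: "real^'r^'n"
    and W1 :: "real^'k^'l::finite" and W2 :: "real^'r^'l"
  assumes "transpose Y1 ** Y1 = mat 1" "transpose Y2 ** Y2 = mat 1" "transpose Y1 ** Y2 = 0"
  shows "(X1 ** G1 ** transpose Y1 + X2 ** G2 ** transpose Y2)
           ** (Y1 ** H1 ** transpose W1 + Y2 ** H2 ** transpose W2)
       = X1 ** (G1 ** H1) ** transpose W1 + X2 ** (G2 ** H2) ** transpose W2"
proof -
  have Y21: "transpose Y2 ** Y1 = 0"
    by (metis assms(3) matrix_transpose_mul transpose_transpose transpose_zero)
  have "Z1 ** transpose Y1 ** Y1 = Z1" "Z2 ** transpose Y2 ** Y2 = Z2"
    "Z1 ** transpose Y1 ** Y2 = 0" "Z2 ** transpose Y2 ** Y1 = 0"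
    for Z1 :: "real^'k^'m" and Z2 :: "real^'r^'m"
    by (metis assms Y21 matrix_mul_assoc matrix_mul_rid times0_right)+
  then show ?thesis
    by (simp add: matrix_add_ldistrib matrix_add_rdistrib matrix_mul_assoc times0_left)
qed

lemma svd_power_mult:
  fixes A :: "real^'n::finite^'m::finite"
    and Uk :: "real^'k::finite^'m" and Vk :: "real^'k^'n"
    and Ur :: "real^'r::finite^'m" and Vr :: "real^'r^'n"
  assumes "transpose Uk ** Uk = mat 1" "transpose Ur ** Ur = mat 1" "transpose Uk ** Ur = 0"
    "transpose Vk ** Vk = mat 1" "transpose Vr ** Vr = mat 1" "transpose Vk ** Vr = 0"
    and A: "A = Uk ** diag_mat a ** transpose Vk + Ur ** diag_mat b ** transpose Vr"
  shows "mat_pow (A ** transpose A) p ** A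
    = Uk ** diag_mat (\<lambda>i. a i ^ (2*p+1)) ** transpose Vk
      + Ur ** diag_mat (\<lambda>i. b i ^ (2*p+1)) ** transpose Vr"
proof (induction p)
  case 0
  then show ?case by (simp add: mat_pow_def A)
next
  case (Suc p)
  have AT: "transpose A = Vk ** diag_mat a ** transpose Uk + Vr ** diag_mat b ** transpose Ur"
    using A by (simp add: matrix_transpose_mul transpose_diag_mat matrix_mul_assoc transpose_add)
  have "A ** transpose A
      = Uk ** (diag_mat a ** diag_mat a) ** transpose Uk + Ur ** (diag_mat b ** diag_mat b) ** transpose Ur"
    unfolding AT by (subst A) (intro svd_block_mult assms(4-6))
  then have AAT: "A ** transpose A
      = Uk ** diag_mat (\<lambda>i. a i * a i) ** transpose Uk + Ur ** diag_mat (\<lambda>i. b i * b i) ** transpose Ur"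
    by (simp add: diag_mat_mult)
  have "mat_pow (A ** transpose A) (Suc p) ** A
      = (A ** transpose A) ** (mat_pow (A ** transpose A) p ** A)"
    by (simp add: mat_pow_def matrix_mul_assoc)
  also have "\<dots> = Uk ** (diag_mat (\<lambda>i. a i * a i) ** diag_mat (\<lambda>i. a i ^ (2*p+1))) ** transpose Vk
      + Ur ** (diag_mat (\<lambda>i. b i * b i) ** diag_mat (\<lambda>i. b i ^ (2*p+1))) ** transpose Vr"
    by (subst Suc.IH, subst AAT) (intro svd_block_mult assms(1-3))
  also have "\<dots> = Uk ** diag_mat (\<lambda>i. a i ^ (2*Suc p+1)) ** transpose Vk
      + Ur ** diag_mat (\<lambda>i. b i ^ (2*Suc p+1)) ** transpose Vr"
    by (simp add: diag_mat_mult power_add power2_eq_square mult_ac)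
  finally show ?case .
qed

lemma sing_val_card_eq_Inf:
  fixes M :: "real^'a::finite^'b::finite"
  shows "sing_val M CARD('a) = (INF x \<in> {x. norm x = 1}. norm (M *v x))"
proof -
  have "subspace W \<Longrightarrow> dim W = CARD('a) \<Longrightarrow> W = UNIV" for W :: "(real^'a) set"
    by (metis dim_eq_full span_eq_iff DIM_cart DIM_real mult_1_right)
  then have "{W :: (real^'a) set. subspace W \<and> dim W = CARD('a)} = {UNIV}"
    by (auto simp: DIM_cart)
  then show ?thesis by (simp add: sing_val_def)
qed

lemma sing_val_card_nonneg: "0 \<le> sing_val (M :: real^'a::finite^'b::finite) CARD('a)"
proof -
  have "{x::real^'a. norm x = 1} \<noteq> {}" using norm_axis_1 by blast
  then show ?thesis unfolding sing_val_card_eq_Inf by (rule cINF_greatest) simp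
qed

lemma sing_val_card_mult_norm_le:
  fixes M :: "real^'a::finite^'b::finite"
  shows "sing_val M CARD('a) * norm x \<le> norm (M *v x)"
proof (cases "x = 0")
  case False
  have "sing_val M CARD('a) \<le> norm (M *v (x /\<^sub>R norm x))"
    unfolding sing_val_card_eq_Inf
    by (rule cINF_lower) (auto intro: bdd_belowI[where m=0] simp: False)
  also have "\<dots> = norm (M *v x) / norm x"
    by (simp add: matrix_vector_mult_scaleR divide_inverse_commute)
  finally show ?thesis using False by (simp add: pos_le_divide_eq)
qed simp

lemma norm_le_sing_val_one:
  fixes M :: "real^'a::finite^'b::finite"
  shows "norm (M *v x) \<le> sing_val M 1 * norm x"
proof (cases "x = 0")
  case False
  let ?F = "\<lambda>W. INF y \<in> {y \<in> W. norm y = 1}. norm (M *v y)"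
  let ?lines = "{W :: (real^'a) set. subspace W \<and> dim W = 1}"
  have bdd: "bdd_above (?F ` ?lines)"
  proof (rule bdd_aboveI2)
    fix W assume W: "W \<in> ?lines"
    then obtain y where y: "y \<in> W" "y \<noteq> 0"
      using dim_subset[of W "{0::real^'a}"] by auto
    then have "?F W \<le> norm (M *v (y /\<^sub>R norm y))"
      using W by (intro cINF_lower) (auto intro: bdd_belowI[where m=0] simp: subspace_scale)
    also have "\<dots> \<le> onorm ((*v) M) * norm (y /\<^sub>R norm y)"
      by (rule onorm) simp
    finally show "?F W \<le> onorm ((*v) M)" using y by simp
  qed
  have "norm (M *v x) / norm x \<le> ?F (span {x})"
  proof (rule cINF_greatest)
    show "{y \<in> span {x}. norm y = 1} \<noteq> {}"
      using False by (auto intro!: exI[of _ "x /\<^sub>R norm x"] simp: span_base span_scale)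
  next
    fix y assume y: "y \<in> {y \<in> span {x}. norm y = 1}"
    then obtain c where yc: "y = c *\<^sub>R x" by (auto simp: span_singleton)
    with y have "\<bar>c\<bar> = 1 / norm x" using False by (simp add: field_simps)
    then show "norm (M *v x) / norm x \<le> norm (M *v y)"
      using yc by (simp add: matrix_vector_mult_scaleR)
  qed
  also have "\<dots> \<le> sing_val M 1"
    unfolding sing_val_def using False by (intro cSUP_upper bdd) (simp add: dim_span)
  finally show ?thesis using False by (simp add: pos_divide_le_eq)
qed simp

lemma proj_cols_of_orthogonal_complement:
  fixes U :: "real^'k::finite^'m::finite" and Q :: "real^'l::finite^'m"
  assumes U: "transpose U ** U = mat 1" and c: "0 \<le> c" and t: "0 \<le> t"
    and tangent: "\<And>v. c * norm (Q *v v - proj_cols U (Q *v v)) \<le> t * norm (proj_cols U (Q *v v))"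
    and onto: "\<And>u. \<exists>v. transpose U *v (Q *v v) = u"
    and y: "transpose Q *v y = 0"
  shows "c * norm (proj_cols U y) \<le> t * norm y"
proof -
  define z where "z = proj_cols U y"
  obtain v where v: "transpose U *v (Q *v v) = transpose U *v y" using onto by blast
  define x where "x = Q *v v"
  have Px: "proj_cols U x = z" by (simp add: proj_cols_def z_def x_def v)
  have xy: "x \<bullet> y = 0" using y by (simp add: x_def inner_matrix_vector_mult_transpose)
  have zy: "z \<bullet> y = z \<bullet> z"
    using proj_cols_residual_orthogonal[OF U, of "transpose U *v y" y]
    by (simp add: z_def proj_cols_def inner_diff_right)
  \<comment> \<open>\<open>z = P x\<close> is both the projection of \<open>y\<close> and of a vector \<open>x\<close> orthogonal to \<open>y\<close>.\<close>
  have "norm z ^ 2 = - ((x - z) \<bullet> y)" using xy zy by (simp add: power2_norm_eq_inner inner_diff_left)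
  also have "\<dots> \<le> norm (x - z) * norm y"
    using norm_cauchy_schwarz[of "z - x" y] by (simp add: inner_diff_left norm_minus_commute)
  finally have "c * norm z ^ 2 \<le> c * norm (x - z) * norm y"
    using c by (simp add: mult_left_mono mult.assoc)
  also have "\<dots> \<le> t * norm z * norm y"
    using tangent[of v] by (simp add: mult_right_mono Px flip: x_def)
  finally have "norm z * (c * norm z) \<le> norm z * (t * norm y)"
    by (simp add: power2_eq_square mult_ac)
  then show ?thesis
    using t by (cases "norm z = 0") (simp_all add: z_def mult_le_cancel_left)
qed

lemma proj_cols_difference_bound:
  fixes U :: "real^'k::finite^'m::finite" and Q :: "real^'l::finite^'m"
  assumes U: "transpose U ** U = mat 1" and Q: "transpose Q ** Q = mat 1"
    and c: "0 \<le> c" and t: "0 \<le> t"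
    and tangent: "\<And>v. c * norm (Q *v v - proj_cols U (Q *v v)) \<le> t * norm (proj_cols U (Q *v v))"
    and onto: "\<And>u. \<exists>v. transpose U *v (Q *v v) = u"
  shows "c * norm (proj_cols U y - proj_cols Q y) \<le> t * norm y"
proof -
  define y1 where "y1 = proj_cols Q y"
  define y2 where "y2 = y - y1"
  define z where "z = proj_cols U y2"
  have "transpose Q *v y2 = 0"
    by (simp add: y2_def y1_def proj_cols_def orthonormal_cols_cancel[OF Q]
        matrix_vector_mult_diff_distrib)
  then have z_bound: "c * norm z \<le> t * norm y2"
    unfolding z_def by (rule proj_cols_of_orthogonal_complement[OF U c t tangent onto])
  have "c * norm (y1 - proj_cols U y1) \<le> t * norm (proj_cols U y1)"
    using tangent[of "transpose Q *v y"] by (simp add: y1_def proj_cols_def[of Q])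
  also have "\<dots> \<le> t * norm y1"
    using proj_cols_norm_le[OF U] t by (rule mult_left_mono)
  finally have y1_bound: "c * norm (y1 - proj_cols U y1) \<le> t * norm y1" .
  define r where "r = y1 - proj_cols U y1"
  have diff: "proj_cols U y - proj_cols Q y = z - r"
    by (simp add: z_def r_def y2_def y1_def proj_cols_def matrix_vector_mult_diff_distrib)
  have "z \<bullet> r = 0"
    unfolding z_def r_def proj_cols_def[of U y2] by (rule proj_cols_residual_orthogonal[OF U])
  then have "norm (z - r) ^ 2 = norm z ^ 2 + norm r ^ 2"
    using norm_add_Pythagorean[of z "- r"] by (simp add: orthogonal_def)
  then have "(c * norm (proj_cols U y - proj_cols Q y)) ^ 2 = (c * norm z) ^ 2 + (c * norm r) ^ 2"
    by (simp add: diff power_mult_distrib distrib_left)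
  also have "\<dots> \<le> (t * norm y2) ^ 2 + (t * norm y1) ^ 2"
    using z_bound y1_bound c unfolding r_def by (intro add_mono power_mono) auto
  also have "\<dots> = (t * norm y) ^ 2"
    using proj_cols_pythagoras[OF Q, of y]
    by (simp add: y2_def y1_def power_mult_distrib algebra_simps)
  finally show ?thesis using c t by (simp add: power2_le_iff_abs_le)
qed

lemma proj_cols_perturbation_bound:
  fixes U Q :: "real^'k::finite^'m::finite" and G R :: "real^'k^'k" and E :: "real^'k^'m"
  assumes U: "transpose U ** U = mat 1" and Q: "transpose Q ** Q = mat 1"
    and Z: "U ** G + E = Q ** R" and UE: "transpose U ** E = 0"
    and c: "0 \<le> c" and G: "\<And>w. c * norm w \<le> norm (G *v w)"
    and E: "\<And>w. norm (E *v w) \<le> t * norm w"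
  shows "c * spec_norm (U ** transpose U - Q ** transpose Q) \<le> t"
proof -
  have t: "0 \<le> t"
    using E[of "axis undefined 1"] by (metis mult.right_neutral norm_axis_1 norm_ge_zero order_trans)
  show ?thesis
  proof (cases "c = 0")
    case False
    have Zw: "Q *v (R *v w) = U *v (G *v w) + E *v w" for w
      by (metis Z matrix_vector_mul_assoc matrix_vector_mult_add_rdistrib)
    have UEw: "transpose U *v (E *v w) = 0" for w
      by (simp add: matrix_vector_mul_assoc UE)
    have UZ: "transpose U *v (Q *v (R *v w)) = G *v w" for w
      unfolding Zw by (simp add: matrix_vector_right_distrib UEw orthonormal_cols_cancel[OF U])
    have G_inj: "G *v w = 0 \<Longrightarrow> w = 0" for w
      using G[of w] c False by (simp add: mult_le_0_iff)
    have R_inj: "R *v w = 0 \<Longrightarrow> w = 0" for w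
      using UZ[of w] G_inj by simp
    have tangent: "c * norm (Q *v v - proj_cols U (Q *v v)) \<le> t * norm (proj_cols U (Q *v v))" for v
    proof -
      obtain w where w: "v = R *v w" using matrix_vector_mult_surj_if_inj[OF R_inj] by metis
      have P: "proj_cols U (Q *v v) = U *v (G *v w)" by (simp add: proj_cols_def w UZ)
      have "c * norm (Q *v v - proj_cols U (Q *v v)) \<le> c * (t * norm w)"
        unfolding P using E[of w] c by (simp add: Zw w mult_left_mono)
      also have "\<dots> \<le> t * norm (G *v w)"
        using mult_left_mono[OF G[of w] t] by (simp add: mult_ac)
      finally show ?thesis by (simp add: P orthonormal_cols_norm[OF U])
    qed
    have onto: "\<exists>v. transpose U *v (Q *v v) = u" for u
      using matrix_vector_mult_surj_if_inj[OF G_inj, where b = u] UZ by metis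
    show ?thesis
      by (rule spec_norm_scaled_le[OF c])
        (simp add: matrix_vector_mult_diff_rdistrib flip: proj_cols_eq,
          rule proj_cols_difference_bound[OF U Q c t tangent onto])
  qed (simp add: t)
qed

lemma subspace_iteration_projection_bound:
  fixes A :: "real^'n::finite^'m::finite"
    and Uk :: "real^'k::finite^'m" and Vk :: "real^'k^'n"
    and Ur :: "real^'r::finite^'m" and Vr :: "real^'r^'n"
    and S :: "real^'k^'n" and Q :: "real^'k^'m" and R :: "real^'k^'k"
  assumes orthonormal: "transpose Uk ** Uk = mat 1" "transpose Ur ** Ur = mat 1"
    "transpose Uk ** Ur = 0" "transpose Vk ** Vk = mat 1" "transpose Vr ** Vr = mat 1"
    "transpose Vk ** Vr = 0"
    and svd: "A = Uk ** diag_mat a ** transpose Vk + Ur ** diag_mat b ** transpose Vr"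
    and a: "\<And>i. \<alpha> \<le> \<bar>a i\<bar>" and \<alpha>: "0 \<le> \<alpha>" and b: "\<And>i. \<bar>b i\<bar> \<le> \<beta>"
    and Q: "transpose Q ** Q = mat 1"
    and QR: "mat_pow (A ** transpose A) p ** A ** S = Q ** R"
  shows "\<alpha> ^ (2*p+1) * sing_val (transpose Vk ** S) CARD('k)
           * spec_norm (Uk ** transpose Uk - Q ** transpose Q)
         \<le> \<beta> ^ (2*p+1) * sing_val (transpose Vr ** S) 1"
proof -
  let ?q = "2*p+1"
  define G where "G = diag_mat (\<lambda>i. a i ^ ?q) ** (transpose Vk ** S)"
  define E where "E = Ur ** diag_mat (\<lambda>i. b i ^ ?q) ** (transpose Vr ** S)"
  have "Uk ** G + E = Q ** R"
    using QR by (simp add: svd_power_mult[OF orthonormal svd] G_def E_def matrix_add_rdistrib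
        matrix_mul_assoc)
  moreover have "transpose Uk ** E = 0"
    by (simp add: E_def matrix_mul_assoc orthonormal(3) times0_left)
  moreover have "0 \<le> \<alpha> ^ ?q * sing_val (transpose Vk ** S) CARD('k)"
    by (intro mult_nonneg_nonneg zero_le_power \<alpha> sing_val_card_nonneg)
  moreover have "\<alpha> ^ ?q * sing_val (transpose Vk ** S) CARD('k) * norm w \<le> norm (G *v w)" for w
  proof -
    have "\<alpha> ^ ?q * (sing_val (transpose Vk ** S) CARD('k) * norm w)
        \<le> \<alpha> ^ ?q * norm ((transpose Vk ** S) *v w)"
      using \<alpha> by (intro mult_left_mono sing_val_card_mult_norm_le) simp
    also have "\<dots> \<le> norm (G *v w)"
      unfolding G_def matrix_vector_mul_assoc[symmetric]
      by (rule norm_diag_mat_mult_ge[OF _ zero_le_power[OF \<alpha>]])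
        (metis power_abs power_mono[OF a \<alpha>])
    finally show ?thesis by (simp add: mult.assoc)
  qed
  moreover have "norm (E *v w) \<le> \<beta> ^ ?q * sing_val (transpose Vr ** S) 1 * norm w" for w
  proof -
    have "norm (E *v w) = norm (diag_mat (\<lambda>i. b i ^ ?q) *v ((transpose Vr ** S) *v w))"
      by (simp add: E_def orthonormal_cols_norm[OF orthonormal(2)]
          flip: matrix_vector_mul_assoc)
    also have "\<dots> \<le> \<beta> ^ ?q * norm ((transpose Vr ** S) *v w)"
      by (rule norm_diag_mat_mult_le) (metis abs_ge_zero power_abs power_mono[OF b])
    also have "\<dots> \<le> \<beta> ^ ?q * (sing_val (transpose Vr ** S) 1 * norm w)"
      using b[of undefined] by (intro mult_left_mono norm_le_sing_val_one) simp
    finally show ?thesis by (simp add: mult.assoc)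
  qed
  ultimately show ?thesis
    by (rule proj_cols_perturbation_bound[OF orthonormal(1) Q])
qed

theorem lemma8:
  fixes A :: "real^'n::finite^'m::finite"
    and Uk :: "real^'k::finite^'m" and Sk :: "real^'k^'k" and Vk :: "real^'k^'n"
    and Ur :: "real^'r::finite^'m" and Sr :: "real^'r^'r" and Vr :: "real^'r^'n"
    and \<sigma> :: "nat \<Rightarrow> real"
    and ek :: "'k \<Rightarrow> nat" and er :: "'r \<Rightarrow> nat"
    and p :: nat
    and S :: "real^'k^'n"
    and Q :: "real^'k^'m" and R :: "real^'k^'k"
    and UQA :: "real^'k^'k" and SQA :: "real^'k^'k" and VQA :: "real^'k^'n"
    and d :: "'k \<Rightarrow> real"
  assumes rank: "rank A = CARD('k) + CARD('r)"
    and ek: "bij_betw ek UNIV {1..CARD('k)}"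
    and er: "bij_betw er UNIV {CARD('k)+1..CARD('k)+CARD('r)}"
    and \<sigma>_mono: "\<And>i j. 1 \<le> i \<Longrightarrow> i \<le> j \<Longrightarrow> j \<le> CARD('k)+CARD('r) \<Longrightarrow> \<sigma> j \<le> \<sigma> i"
    and \<sigma>_pos: "\<sigma> (CARD('k)+CARD('r)) > 0"
    and Sk: "Sk = (\<chi> i j. if i = j then \<sigma> (ek i) else 0)"
    and Sr: "Sr = (\<chi> i j. if i = j then \<sigma> (er i) else 0)"
    and Uk_orth: "transpose Uk ** Uk = mat 1"
    and Ur_orth: "transpose Ur ** Ur = mat 1"
    and UkUr: "transpose Uk ** Ur = 0"
    and Vk_orth: "transpose Vk ** Vk = mat 1"
    and Vr_orth: "transpose Vr ** Vr = mat 1"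
    and VkVr: "transpose Vk ** Vr = 0"
    and svd: "A = Uk ** Sk ** transpose Vk + Ur ** Sr ** transpose Vr"
    and Q_orth: "transpose Q ** Q = mat 1"
    and QR: "mat_pow (A ** transpose A) p ** A ** S = Q ** R"
    and UQA_orth: "orthogonal_matrix UQA"
    and VQA_orth: "transpose VQA ** VQA = mat 1"
    and d_nonneg: "\<And>i. d i \<ge> 0"
    and d_mono: "\<And>i j. ek i \<le> ek j \<Longrightarrow> d j \<le> d i"
    and SQA: "SQA = (\<chi> i j. if i = j then d i else 0)"
    and svdQA: "transpose Q ** A = UQA ** SQA ** transpose VQA"
  shows "sing_val (transpose Vk ** S) CARD('k)
           * spec_norm (Uk ** transpose Uk - (Q ** UQA) ** transpose (Q ** UQA))
         \<le> (\<sigma> (CARD('k)+1) / \<sigma> (CARD('k))) ^ (2*p+1) * sing_val (transpose Vr ** S) 1"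
proof -
  let ?K = "CARD('k)" and ?q = "2*p+1"
  have \<sigma>_pos_K1: "0 < \<sigma> (?K+1)"
    using \<sigma>_mono[of "?K+1" "?K+CARD('r)"] \<sigma>_pos by simp
  have top: "\<sigma> ?K \<le> \<bar>\<sigma> (ek i)\<bar>" for i
    using bij_betw_apply[OF ek UNIV_I, of i] \<sigma>_mono[of "ek i" ?K] \<sigma>_mono[of ?K "?K+1"] \<sigma>_pos_K1
    by auto
  have tail: "\<bar>\<sigma> (er i)\<bar> \<le> \<sigma> (?K+1)" for i
    using bij_betw_apply[OF er UNIV_I, of i] \<sigma>_mono[of "?K+1" "er i"]
      \<sigma>_mono[of "er i" "?K+CARD('r)"] \<sigma>_pos
    by auto
  have \<sigma>_pos_K: "0 < \<sigma> ?K"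
    using \<sigma>_mono[of ?K "?K+1"] \<sigma>_pos_K1 by simp
  have "A = Uk ** diag_mat (\<lambda>i. \<sigma> (ek i)) ** transpose Vk + Ur ** diag_mat (\<lambda>i. \<sigma> (er i)) ** transpose Vr"
    by (simp add: svd Sk Sr diag_mat_def)
  from subspace_iteration_projection_bound[OF Uk_orth Ur_orth UkUr Vk_orth Vr_orth VkVr this top
      _ tail Q_orth QR]
  have "\<sigma> ?K ^ ?q * sing_val (transpose Vk ** S) ?K * spec_norm (Uk ** transpose Uk - Q ** transpose Q)
      \<le> \<sigma> (?K+1) ^ ?q * sing_val (transpose Vr ** S) 1"
    using \<sigma>_pos_K by simp
  \<comment> \<open>The SVD of \<open>Q\<^sup>T A\<close> enters only through the orthogonality of \<open>UQA\<close>.\<close>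
  moreover have "(Q ** UQA) ** transpose (Q ** UQA) = Q ** transpose Q"
    using UQA_orth by (simp add: orthogonal_matrix_def matrix_transpose_mul matrix_mul_assoc)
      (simp flip: matrix_mul_assoc)
  ultimately show ?thesis
    using \<sigma>_pos_K by (simp add: power_divide field_simps)
qed

end
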